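(* Let $m$ be the normalized Lebesgue measure on $[-\pi,\pi]^N$ and for $(\theta_i^0)\in[-\pi,\pi]^N$ let $R_0=\frac1N\sum_{j=1}^N(1+\cos\theta_j^0)$. For every $t\in(0,1)$, \[ m\{(\theta_i^0)\in[-\pi,\pi]^N: R_0\le t\}\le\min\left\{\exp\big(-(1-t)^2N\big),\ \Big(\frac{\sqrt{\pi et}}{2}\Big)^N\right\}. \] *)

theory Defs
  imports "HOL-Analysis.Analysis"
begin

definition cube_measure :: "nat \<Rightarrow> (nat \<Rightarrow> real) measure" where
  "cube_measure N = PiM {1..N} (\<lambda>_. uniform_measure lborel {-pi..pi})"

definition R0 :: "nat \<Rightarrow> (nat \<Rightarrow> real) \<Rightarrow> real" where
  "R0 N \<theta> = (1 / real N) * (\<Sum>j=1..N. 1 + cos (\<theta> j))"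

end

theory Submission
  imports Defs "HOL-Probability.Distributions"
begin

text \<open>
  Chernoff's method for the independent variables \<open>1 + cos \<theta>\<^sub>j\<close> bounds the measure by
  \<open>(exp (\<lambda> t) E exp (- \<lambda> (1 + cos \<theta>)))\<^sup>N\<close> for every \<open>\<lambda> > 0\<close>, so both bounds reduce to
  estimates of a single exponential moment. The shift \<open>\<theta> \<mapsto> \<theta> + \<pi>\<close> preserves the uniform
  distribution and changes the sign of \<open>cos \<theta>\<close>; hence
  \<open>E exp (\<lambda> cos \<theta>) = E cosh (\<lambda> cos \<theta>) \<le> 1 + (cosh \<lambda> - 1) E cos\<^sup>2 \<theta> = cosh\<^sup>2 (\<lambda>/2) \<le> exp (\<lambda>\<^sup>2/4)\<close>,
  and \<open>\<lambda> = 2 (1 - t)\<close> gives the first bound. For the second, Jordan's inequality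
  \<open>1 - cos x \<ge> 2 x\<^sup>2 / \<pi>\<^sup>2\<close> bounds \<open>E exp (- \<lambda> (1 - cos \<theta>))\<close> by a Gaussian integral,
  \<open>sqrt (\<pi> / (2 \<lambda>)) / 2\<close>, and one takes \<open>\<lambda> = 1 / (2 t)\<close>.
\<close>

lemma power_two_mult_fact_le_fact_double: "2 ^ k * fact k \<le> (fact (2 * k) :: real)"
proof (induction k)
  case (Suc k)
  have "2 ^ Suc k * fact (Suc k) = (2 ^ k * fact k) * (2 * real k + 2)"
    by (simp add: algebra_simps)
  also have "\<dots> \<le> fact (2 * k) * ((2 * real k + 1) * (2 * real k + 2))"
    using Suc.IH by (intro mult_mono) (auto simp: algebra_simps)
  also have "\<dots> = fact (2 * Suc k)"
    by (simp add: algebra_simps)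
  finally show ?case .
qed simp

lemma cosh_le_exp_square_half: "cosh x \<le> exp (x\<^sup>2 / 2)" for x :: real
proof -
  define y where "y = x\<^sup>2 / 2"
  have "y \<ge> 0" by (simp add: y_def)
  let ?f = "\<lambda>n. if even n then y ^ (n div 2) / fact (n div 2) else 0 :: real"
  have "(\<lambda>k. ?f (2 * k)) sums exp y"
    using exp_converges[of y] by (simp add: divide_inverse_commute)
  then have exp_sums: "?f sums exp y"
    by (subst sums_mono_reindex[of "\<lambda>k. 2 * k", symmetric]) (auto simp: strict_mono_def)
  have "cosh x \<le> exp y"
  proof (rule sums_le[OF _ cosh_converges exp_sums])
    fix n
    show "(if even n then x ^ n /\<^sub>R fact n else 0) \<le> ?f n"
    proof (cases "even n")
      case True
      then obtain k where n: "n = 2 * k" by blast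
      have "x ^ n = 2 ^ k * y ^ k"
        by (simp add: n y_def power_mult power_divide)
      then have "x ^ n /\<^sub>R fact n = 2 ^ k * y ^ k / fact (2 * k)"
        by (simp add: n divide_inverse_commute)
      also have "\<dots> \<le> 2 ^ k * y ^ k / (2 ^ k * fact k)"
        using \<open>y \<ge> 0\<close> by (intro divide_left_mono power_two_mult_fact_le_fact_double) auto
      finally show ?thesis using n by simp
    qed simp
  qed
  then show ?thesis by (simp add: y_def)
qed

lemma cosh_mult_le:
  fixes l c :: real
  assumes "\<bar>c\<bar> \<le> 1"
  shows "cosh (l * c) \<le> 1 + c\<^sup>2 * (cosh l - 1)"
proof -
  have c2: "0 \<le> c\<^sup>2" "c\<^sup>2 \<le> 1"
    using assms by (auto simp: abs_square_le_1)
  let ?g = "\<lambda>n. (if n = 0 then 1 - c\<^sup>2 else 0) + c\<^sup>2 * (if even n then l ^ n /\<^sub>R fact n else 0)"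
  have g_sums: "?g sums ((1 - c\<^sup>2) + c\<^sup>2 * cosh l)"
    by (intro sums_add sums_mult cosh_converges sums_single)
  have "cosh (l * c) \<le> (1 - c\<^sup>2) + c\<^sup>2 * cosh l"
  proof (rule sums_le[OF _ cosh_converges g_sums])
    fix n
    show "(if even n then (l * c) ^ n /\<^sub>R fact n else 0) \<le> ?g n"
    proof (cases "even n \<and> n \<noteq> 0")
      case True
      then obtain k where n: "n = 2 * k" and "k \<ge> 1" by (auto elim!: evenE)
      have "c ^ n = (c\<^sup>2) ^ k" by (simp add: n power_mult)
      also have "\<dots> \<le> c\<^sup>2"
        using c2 \<open>k \<ge> 1\<close> power_decreasing[of 1 k "c\<^sup>2"] by simp
      finally have "c ^ n \<le> c\<^sup>2" .
      moreover have "0 \<le> l ^ n / fact n"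
        using True by (simp add: zero_le_even_power)
      ultimately have "c ^ n * (l ^ n / fact n) \<le> c\<^sup>2 * (l ^ n / fact n)"
        by (rule mult_right_mono)
      then show ?thesis
        using True by (simp add: power_mult_distrib divide_inverse mult_ac)
    qed auto
  qed
  then show ?thesis by (simp add: algebra_simps)
qed

lemma one_minus_cos_ge_square:
  fixes x :: real
  assumes "\<bar>x\<bar> \<le> pi"
  shows "2 * x\<^sup>2 / pi\<^sup>2 \<le> 1 - cos x"
proof -
  have "concave_on {0..pi} sin"
    by (rule f''_le0_imp_concave[where f' = cos and f'' = "\<lambda>x. - sin x"])
       (auto intro!: derivative_eq_intros sin_ge_zero)
  define s where "s = \<bar>x\<bar> / pi"
  have s: "0 \<le> s" "s \<le> 1"
    using assms by (auto simp: s_def)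
  have "(1 - s) * sin 0 + s * sin (pi / 2) \<le> sin ((1 - s) *\<^sub>R 0 + s *\<^sub>R (pi / 2))"
    by (rule concave_onD[OF \<open>concave_on {0..pi} sin\<close>]) (use s in auto)
  then have "s \<le> sin (\<bar>x\<bar> / 2)"
    by (simp add: s_def)
  then have "s\<^sup>2 \<le> sin (\<bar>x\<bar> / 2) ^ 2"
    using s by (intro power_mono) auto
  moreover have "cos \<bar>x\<bar> = 1 - 2 * sin (\<bar>x\<bar> / 2) ^ 2"
    using cos_double_sin[of "\<bar>x\<bar> / 2"] by simp
  ultimately show ?thesis
    by (simp add: s_def power_divide)
qed

lemma nn_integral_cos_eq_neg_cos:
  fixes g :: "real \<Rightarrow> ennreal"
  assumes [measurable]: "g \<in> borel_measurable borel"
  shows "(\<integral>\<^sup>+x\<in>{-pi..pi}. g (cos x) \<partial>lborel) = (\<integral>\<^sup>+x\<in>{-pi..pi}. g (- cos x) \<partial>lborel)"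
proof -
  have halves: "(\<integral>\<^sup>+x\<in>{-pi..pi}. h x \<partial>lborel)
      = (\<integral>\<^sup>+x\<in>{-pi..0}. h x \<partial>lborel) + (\<integral>\<^sup>+x\<in>{0..pi}. h x \<partial>lborel)"
    if [measurable]: "h \<in> borel_measurable borel" for h :: "real \<Rightarrow> ennreal"
  proof -
    have "(\<integral>\<^sup>+x\<in>{-pi..pi}. h x \<partial>lborel)
        = (\<integral>\<^sup>+x. h x * indicator {-pi..0} x + h x * indicator {0..pi} x \<partial>lborel)"
      by (intro nn_integral_cong_AE eventually_mono[OF AE_lborel_singleton[of 0]])
         (auto split: split_indicator)
    then show ?thesis
      by (simp add: nn_integral_add)
  qed
  have "(\<integral>\<^sup>+x\<in>{-pi..0}. g (cos x) \<partial>lborel) = (\<integral>\<^sup>+x\<in>{0..pi}. g (- cos x) \<partial>lborel)"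
    by (subst nn_integral_real_affine[where c = 1 and t = "-pi"])
       (auto intro!: nn_integral_cong split: split_indicator)
  moreover have "(\<integral>\<^sup>+x\<in>{0..pi}. g (cos x) \<partial>lborel) = (\<integral>\<^sup>+x\<in>{-pi..0}. g (- cos x) \<partial>lborel)"
    by (subst nn_integral_real_affine[where c = 1 and t = pi])
       (auto intro!: nn_integral_cong split: split_indicator)
  ultimately show ?thesis
    by (simp add: halves add.commute)
qed

lemma nn_integral_cos_square:
  fixes a b :: real
  assumes "0 \<le> a" "0 \<le> b"
  shows "(\<integral>\<^sup>+x\<in>{-pi..pi}. ennreal (a + b * (cos x)\<^sup>2) \<partial>lborel) = ennreal ((2 * a + b) * pi)"
proof -
  define F where "F x = a * x + b * (x / 2 + sin (2 * x) / 4)" for x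
  have "(F has_real_derivative a + b * (cos x)\<^sup>2) (at x)" for x
  proof -
    have "(F has_real_derivative a + b * (1 + cos (2 * x)) / 2) (at x)"
      unfolding F_def by (auto intro!: derivative_eq_intros simp: field_simps)
    then show ?thesis
      by (simp add: cos_double_cos)
  qed
  then have "(\<integral>\<^sup>+x\<in>{-pi..pi}. ennreal (a + b * (cos x)\<^sup>2) \<partial>lborel) = F pi - F (- pi)"
    using assms by (intro nn_integral_FTC_Icc) auto
  also have "F pi - F (- pi) = (2 * a + b) * pi"
    by (simp add: F_def algebra_simps)
  finally show ?thesis .
qed

lemma nn_integral_gaussian:
  fixes a :: real
  assumes "0 < a"
  shows "(\<integral>\<^sup>+x. ennreal (exp (- a * x\<^sup>2)) \<partial>lborel) = ennreal (sqrt (pi / a))"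
proof -
  define \<sigma> where "\<sigma> = sqrt (1 / (2 * a))"
  have density: "exp (- a * x\<^sup>2) = sqrt (pi / a) * normal_density 0 \<sigma> x" for x
    using assms by (simp add: normal_density_def \<sigma>_def real_sqrt_divide field_simps)
  have "0 < \<sigma>"
    using assms by (simp add: \<sigma>_def)
  then have normal: "(\<integral>\<^sup>+x. ennreal (normal_density 0 \<sigma> x) \<partial>lborel) = 1"
    by (subst nn_integral_eq_integral) auto
  have "(\<integral>\<^sup>+x. ennreal (exp (- a * x\<^sup>2)) \<partial>lborel)
      = (\<integral>\<^sup>+x. ennreal (sqrt (pi / a)) * ennreal (normal_density 0 \<sigma> x) \<partial>lborel)"
    unfolding density using assms by (intro nn_integral_cong ennreal_mult) auto
  also have "\<dots> = ennreal (sqrt (pi / a))"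
    by (simp add: nn_integral_cmult normal)
  finally show ?thesis .
qed

lemma nn_integral_exp_cos_le:
  fixes l :: real
  shows "(\<integral>\<^sup>+x\<in>{-pi..pi}. ennreal (exp (l * cos x)) \<partial>lborel) \<le> ennreal (2 * pi * exp (l\<^sup>2 / 4))"
proof -
  have cosh_bound: "(1 + cosh l) * pi \<le> 2 * pi * exp (l\<^sup>2 / 4)"
  proof -
    have "1 + cosh l = 2 * cosh (l / 2) ^ 2"
      using cosh_double[of "l / 2"] cosh_square_eq[of "l / 2"] by simp
    also have "cosh (l / 2) ^ 2 \<le> exp ((l / 2)\<^sup>2 / 2) ^ 2"
      using cosh_le_exp_square_half cosh_real_pos by (intro power_mono) (auto intro: less_imp_le)
    also have "exp ((l / 2)\<^sup>2 / 2) ^ 2 = exp (l\<^sup>2 / 4)"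
      by (simp add: power2_eq_square flip: exp_add)
    finally show ?thesis by simp
  qed
  let ?I = "\<integral>\<^sup>+x\<in>{-pi..pi}. ennreal (exp (l * cos x)) \<partial>lborel"
  have "?I = (\<integral>\<^sup>+x\<in>{-pi..pi}. ennreal (exp (- l * cos x)) \<partial>lborel)"
    using nn_integral_cos_eq_neg_cos[of "\<lambda>u. ennreal (exp (l * u))"] by simp
  then have "2 * ?I = (\<integral>\<^sup>+x\<in>{-pi..pi}. ennreal (exp (l * cos x)) + ennreal (exp (- l * cos x)) \<partial>lborel)"
    by (simp add: mult_2 nn_integral_add distrib_right)
  also have "\<dots> \<le> (\<integral>\<^sup>+x\<in>{-pi..pi}. ennreal (2 + 2 * (cosh l - 1) * (cos x)\<^sup>2) \<partial>lborel)"
  proof (intro nn_integral_mono mult_right_mono)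
    fix x
    have "exp (l * cos x) + exp (- l * cos x) = 2 * cosh (l * cos x)"
      by (simp add: cosh_field_def)
    also have "\<dots> \<le> 2 + 2 * (cosh l - 1) * (cos x)\<^sup>2"
      using cosh_mult_le[of "cos x" l] by (simp add: algebra_simps)
    finally show "ennreal (exp (l * cos x)) + ennreal (exp (- l * cos x))
        \<le> ennreal (2 + 2 * (cosh l - 1) * (cos x)\<^sup>2)"
      by (simp add: ennreal_leI flip: ennreal_plus)
  qed auto
  also have "\<dots> = ennreal (2 * ((1 + cosh l) * pi))"
    using nn_integral_cos_square[of 2 "2 * (cosh l - 1)"] cosh_real_ge_1[of l]
    by (simp add: algebra_simps)
  also have "\<dots> \<le> ennreal (2 * (2 * pi * exp (l\<^sup>2 / 4)))"
    using cosh_bound by (intro ennreal_leI) simp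
  also have "\<dots> = 2 * ennreal (2 * pi * exp (l\<^sup>2 / 4))"
    using ennreal_mult'[of 2 "2 * pi * exp (l\<^sup>2 / 4)"] by simp
  finally have "2 * ?I \<le> 2 * ennreal (2 * pi * exp (l\<^sup>2 / 4))" .
  then show ?thesis
    by (simp add: ennreal_mult_le_mult_iff)
qed

lemma nn_integral_exp_one_plus_cos_le:
  fixes l :: real
  assumes "0 < l"
  shows "(\<integral>\<^sup>+x\<in>{-pi..pi}. ennreal (exp (- l * (1 + cos x))) \<partial>lborel) \<le> ennreal (pi * sqrt (pi / (2 * l)))"
proof -
  define a where "a = 2 * l / pi\<^sup>2"
  have "0 < a"
    using assms by (simp add: a_def)
  have "(\<integral>\<^sup>+x\<in>{-pi..pi}. ennreal (exp (- l * (1 + cos x))) \<partial>lborel)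
      = (\<integral>\<^sup>+x\<in>{-pi..pi}. ennreal (exp (- l * (1 - cos x))) \<partial>lborel)"
    using nn_integral_cos_eq_neg_cos[of "\<lambda>u. ennreal (exp (- l * (1 + u)))"] by simp
  also have "\<dots> \<le> (\<integral>\<^sup>+x\<in>{-pi..pi}. ennreal (exp (- a * x\<^sup>2)) \<partial>lborel)"
  proof (intro nn_integral_mono)
    fix x :: real
    have "a * x\<^sup>2 \<le> l * (1 - cos x)" if "\<bar>x\<bar> \<le> pi"
    proof -
      have "a * x\<^sup>2 = l * (2 * x\<^sup>2 / pi\<^sup>2)"
        by (simp add: a_def)
      also have "\<dots> \<le> l * (1 - cos x)"
        using assms one_minus_cos_ge_square[OF that] by (intro mult_left_mono) auto
      finally show ?thesis .
    qed
    then show "ennreal (exp (- l * (1 - cos x))) * indicator {-pi..pi} x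
        \<le> ennreal (exp (- a * x\<^sup>2)) * indicator {-pi..pi} x"
      by (auto split: split_indicator)
  qed
  also have "\<dots> \<le> (\<integral>\<^sup>+x. ennreal (exp (- a * x\<^sup>2)) \<partial>lborel)"
    by (intro nn_integral_mono) (simp split: split_indicator)
  also have "\<dots> = ennreal (sqrt (pi / a))"
    using \<open>0 < a\<close> by (rule nn_integral_gaussian)
  also have "sqrt (pi / a) = pi * sqrt (pi / (2 * l))"
    using assms by (simp add: a_def real_sqrt_divide real_sqrt_mult)
  finally show ?thesis .
qed

lemma (in sigma_finite_measure) emeasure_PiM_sum_le_Chernoff:
  fixes f :: "'a \<Rightarrow> real"
  assumes "finite I" and "0 < l" and [measurable]: "f \<in> borel_measurable M"
  shows "emeasure (\<Pi>\<^sub>M i\<in>I. M) {x \<in> space (\<Pi>\<^sub>M i\<in>I. M). (\<Sum>i\<in>I. f (x i)) \<le> a}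
           \<le> ennreal (exp (l * a)) * (\<integral>\<^sup>+y. ennreal (exp (- l * f y)) \<partial>M) ^ card I"
proof -
  interpret product_sigma_finite "\<lambda>_. M"
    by (simp add: product_sigma_finite_def sigma_finite_measure_axioms)
  let ?P = "\<Pi>\<^sub>M i\<in>I. M"
  have "emeasure ?P {x \<in> space ?P. (\<Sum>i\<in>I. f (x i)) \<le> a}
      \<le> ennreal (exp (l * a)) * (\<integral>\<^sup>+x\<in>space ?P. ennreal (exp (- l * (\<Sum>i\<in>I. f (x i)))) \<partial>?P)"
    using \<open>0 < l\<close> by (intro Chernoff_ineq_nn_integral_le) auto
  also have "(\<integral>\<^sup>+x\<in>space ?P. ennreal (exp (- l * (\<Sum>i\<in>I. f (x i)))) \<partial>?P)
      = (\<integral>\<^sup>+x. (\<Prod>i\<in>I. ennreal (exp (- l * f (x i)))) \<partial>?P)"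
    using \<open>finite I\<close> by (intro nn_integral_cong) (simp add: sum_distrib_left exp_sum prod_ennreal)
  also have "\<dots> = (\<integral>\<^sup>+y. ennreal (exp (- l * f y)) \<partial>M) ^ card I"
    using product_nn_integral_prod[OF \<open>finite I\<close>, of "\<lambda>_ y. ennreal (exp (- l * f y))"] by simp
  finally show ?thesis .
qed

lemma measure_R0_le_power:
  fixes N :: nat and t l B :: real
  assumes "0 < l" and "0 \<le> B"
    and mgf: "ennreal (exp (l * t)) * (\<integral>\<^sup>+x\<in>{-pi..pi}. ennreal (exp (- l * (1 + cos x))) \<partial>lborel)
              \<le> ennreal (2 * pi * B)"
  shows "measure (cube_measure N) {\<theta> \<in> {1..N} \<rightarrow>\<^sub>E {-pi..pi}. R0 N \<theta> \<le> t} \<le> B ^ N"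
proof -
  define M where "M = uniform_measure lborel {-pi..pi::real}"
  interpret M: prob_space M
    unfolding M_def by (intro prob_space_uniform_measure) auto
  have cube: "cube_measure N = (\<Pi>\<^sub>M j\<in>{1..N}. M)"
    by (simp add: cube_measure_def M_def)
  interpret P: prob_space "cube_measure N"
    unfolding cube by (intro prob_space_PiM M.prob_space_axioms)
  have M_mgf: "ennreal (exp (l * t)) * (\<integral>\<^sup>+y. ennreal (exp (- l * (1 + cos y))) \<partial>M) \<le> ennreal B"
  proof -
    have "(\<integral>\<^sup>+y. ennreal (exp (- l * (1 + cos y))) \<partial>M)
        = (\<integral>\<^sup>+x\<in>{-pi..pi}. ennreal (exp (- l * (1 + cos x))) \<partial>lborel) / ennreal (2 * pi)"
      unfolding M_def by (subst nn_integral_uniform_measure) auto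
    then have "ennreal (exp (l * t)) * (\<integral>\<^sup>+y. ennreal (exp (- l * (1 + cos y))) \<partial>M)
        \<le> ennreal (2 * pi * B) / ennreal (2 * pi)"
      using mgf by (simp add: ennreal_times_divide divide_right_mono_ennreal)
    also have "\<dots> = ennreal B"
      using \<open>0 \<le> B\<close> by (simp add: divide_ennreal)
    finally show ?thesis .
  qed
  define S where "S = {\<theta> \<in> space (cube_measure N). (\<Sum>j\<in>{1..N}. 1 + cos (\<theta> j)) \<le> real N * t}"
  have "S \<in> sets (cube_measure N)"
    unfolding S_def cube M_def by measurable
  have "{\<theta> \<in> {1..N} \<rightarrow>\<^sub>E {-pi..pi}. R0 N \<theta> \<le> t} \<subseteq> S"
    unfolding S_def cube M_def
    by (cases "N = 0") (auto simp: space_PiM R0_def PiE_def Pi_def field_simps)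
  then have "measure (cube_measure N) {\<theta> \<in> {1..N} \<rightarrow>\<^sub>E {-pi..pi}. R0 N \<theta> \<le> t} \<le> measure (cube_measure N) S"
    using \<open>S \<in> sets (cube_measure N)\<close> by (rule P.finite_measure_mono)
  moreover have "emeasure (cube_measure N) S \<le> ennreal (B ^ N)"
  proof -
    have "emeasure (cube_measure N) S
        \<le> ennreal (exp (l * (real N * t))) * (\<integral>\<^sup>+y. ennreal (exp (- l * (1 + cos y))) \<partial>M) ^ N"
      using M.emeasure_PiM_sum_le_Chernoff[OF _ \<open>0 < l\<close>, of "{1..N}" "\<lambda>y. 1 + cos y" "real N * t"]
      unfolding S_def cube M_def by simp
    also have "\<dots> = (ennreal (exp (l * t)) * (\<integral>\<^sup>+y. ennreal (exp (- l * (1 + cos y))) \<partial>M)) ^ N"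
      by (simp add: power_mult_distrib ennreal_power exp_of_nat_mult[symmetric] mult_ac)
    also have "\<dots> \<le> ennreal B ^ N"
      using M_mgf by (rule power_mono) simp
    finally show ?thesis
      using \<open>0 \<le> B\<close> by (simp add: ennreal_power)
  qed
  then have "measure (cube_measure N) S \<le> B ^ N"
    using \<open>0 \<le> B\<close> by (simp add: P.emeasure_eq_measure)
  ultimately show ?thesis by linarith
qed

lemma measure_R0_le_exp:
  fixes N :: nat and t :: real
  assumes "t < 1"
  shows "measure (cube_measure N) {\<theta> \<in> {1..N} \<rightarrow>\<^sub>E {-pi..pi}. R0 N \<theta> \<le> t} \<le> exp (- ((1 - t)\<^sup>2 * real N))"
proof -
  define l where "l = 2 * (1 - t)"
  have "0 < l"
    using assms by (simp add: l_def)
  have "ennreal (exp (- l * (1 + cos x))) = ennreal (exp (- l)) * ennreal (exp ((- l) * cos x))" for x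
    by (simp add: algebra_simps flip: ennreal_mult' exp_add)
  then have factor: "(\<integral>\<^sup>+x\<in>{-pi..pi}. ennreal (exp (- l * (1 + cos x))) \<partial>lborel)
      = ennreal (exp (- l)) * (\<integral>\<^sup>+x\<in>{-pi..pi}. ennreal (exp ((- l) * cos x)) \<partial>lborel)"
    by (simp add: nn_integral_cmult mult.assoc)
  have "ennreal (exp (l * t)) * (\<integral>\<^sup>+x\<in>{-pi..pi}. ennreal (exp (- l * (1 + cos x))) \<partial>lborel)
      \<le> ennreal (exp (l * t)) * (ennreal (exp (- l)) * ennreal (2 * pi * exp ((- l)\<^sup>2 / 4)))"
    unfolding factor by (intro mult_left_mono nn_integral_exp_cos_le) simp_all
  also have "\<dots> = ennreal (2 * pi * exp (- ((1 - t)\<^sup>2)))"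
    by (simp add: l_def power2_eq_square field_simps flip: ennreal_mult' exp_add)
  finally have "measure (cube_measure N) {\<theta> \<in> {1..N} \<rightarrow>\<^sub>E {-pi..pi}. R0 N \<theta> \<le> t}
      \<le> exp (- ((1 - t)\<^sup>2)) ^ N"
    using \<open>0 < l\<close> by (intro measure_R0_le_power) auto
  then show ?thesis
    by (simp add: exp_of_nat_mult[symmetric] mult.commute)
qed

lemma measure_R0_le_sqrt:
  fixes N :: nat and t :: real
  assumes "0 < t"
  shows "measure (cube_measure N) {\<theta> \<in> {1..N} \<rightarrow>\<^sub>E {-pi..pi}. R0 N \<theta> \<le> t} \<le> (sqrt (pi * exp 1 * t) / 2) ^ N"
proof -
  define l where "l = 1 / (2 * t)"
  have "0 < l"
    using assms by (simp add: l_def)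
  have "sqrt (exp 1) = exp (1 / 2)"
    by (rule real_sqrt_unique) (simp_all add: power2_eq_square flip: exp_add)
  have "ennreal (exp (l * t)) * (\<integral>\<^sup>+x\<in>{-pi..pi}. ennreal (exp (- l * (1 + cos x))) \<partial>lborel)
      \<le> ennreal (exp (l * t) * (pi * sqrt (pi / (2 * l))))"
    using nn_integral_exp_one_plus_cos_le[OF \<open>0 < l\<close>] by (simp add: ennreal_mult' mult_left_mono)
  also have "exp (l * t) * (pi * sqrt (pi / (2 * l))) = 2 * pi * (sqrt (pi * exp 1 * t) / 2)"
    using assms \<open>sqrt (exp 1) = exp (1 / 2)\<close> by (simp add: l_def real_sqrt_mult)
  finally show ?thesis
    using \<open>0 < l\<close> assms by (intro measure_R0_le_power) auto
qed

theorem lemma5p4: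
  fixes N :: nat and t :: real
  assumes "N \<ge> 1" and "0 < t" and "t < 1"
  shows "measure (cube_measure N) {\<theta> \<in> {1..N} \<rightarrow>\<^sub>E {-pi..pi}. R0 N \<theta> \<le> t}
           \<le> min (exp (- ((1 - t)^2 * real N))) ((sqrt (pi * exp 1 * t) / 2) ^ N)"
  using measure_R0_le_exp[OF \<open>t < 1\<close>] measure_R0_le_sqrt[OF \<open>0 < t\<close>] by simp

end
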